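(* For all $n\ge1$, the number of $2$-element faces of the broken circuit complex of $\mathcal{A}_n$ (with respect to the binary order) is \[ f_1(BC(\mathcal{A}_n))=2S(n+1,3)+3S(n+1,4). \]
   Context: For $n\ge1$, $\mathcal{A}_n$ is the resonance arrangement in $\mathbb{R}^n$ of hyperplanes $H_I=\{x:\sum_{i\in I}x_i=0\}$, $\emptyset\ne I\subseteq[n]$. Binary order: $H_I$ is encoded by $\sum_{j\in I}2^j$ and hyperplanes are linearly ordered by this number. A circuit is a minimally linearly dependent set of hyperplanes (of normal vectors $\chi_I$); a broken circuit is $C\setminus\{H\}$ with $C$ a circuit and $H$ its largest element. The broken circuit complex $BC(\mathcal{A})$ is the simplicial complex of subsets of $\mathcal{A}$ containing no broken circuit, and $f_1$ counts its faces with $2$ elements. $S(n,k)$ denotes the Stirling number of the second kind. *)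

theory Defs
  imports Complex_Main "HOL-Combinatorics.Stirling"
begin

text \<open>The resonance arrangement A_n: one hyperplane H_I for each nonempty I \<subseteq> [n] = {1..n};
  we identify H_I with its index set I.\<close>
definition res_hyps :: "nat \<Rightarrow> nat set set" where
  "res_hyps n = {I. I \<subseteq> {1..n} \<and> I \<noteq> {}}"

text \<open>Normal vector chi_I (a vector in R^n, coordinates indexed by 1..n, zero elsewhere).\<close>
definition chi :: "nat set \<Rightarrow> nat \<Rightarrow> real" where
  "chi I j = (if j \<in> I then 1 else 0)"

definition lin_dep :: "nat set set \<Rightarrow> bool" where
  "lin_dep S \<longleftrightarrow> (\<exists>c :: nat set \<Rightarrow> real. (\<exists>I\<in>S. c I \<noteq> 0) \<and>
                     (\<forall>j. (\<Sum>I\<in>S. c I * chi I j) = 0))"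

text \<open>Binary order: H_I is encoded by sum of 2^j over j in I.\<close>
definition bin_code :: "nat set \<Rightarrow> nat" where
  "bin_code I = (\<Sum>j\<in>I. 2 ^ j)"

definition circuit :: "nat \<Rightarrow> nat set set \<Rightarrow> bool" where
  "circuit n C \<longleftrightarrow> C \<subseteq> res_hyps n \<and> lin_dep C \<and> (\<forall>D. D \<subset> C \<longrightarrow> \<not> lin_dep D)"

definition broken_circuit :: "nat \<Rightarrow> nat set set \<Rightarrow> bool" where
  "broken_circuit n B \<longleftrightarrow> (\<exists>C H. circuit n C \<and> H \<in> C \<and>
      (\<forall>H'\<in>C. bin_code H' \<le> bin_code H) \<and> B = C - {H})"

definition bc_faces :: "nat \<Rightarrow> nat set set set" where
  "bc_faces n = {F. F \<subseteq> res_hyps n \<and> \<not> (\<exists>B. broken_circuit n B \<and> B \<subseteq> F)}"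

definition f1_BC :: "nat \<Rightarrow> nat" where
  "f1_BC n = card {F \<in> bc_faces n. card F = 2}"

end

theory Submission
  imports Defs "HOL-Library.FuncSet"
begin

text \<open>A pair {A, B} of distinct hyperplanes is a face of BC(A_n) exactly when A and B
  intersect. If they are disjoint, {A, B, A \<union> B} is a circuit whose binary-largest element
  is A \<union> B, so {A, B} is itself a broken circuit. If they intersect, a circuit C whose
  broken part lies in {A, B} must contain A and B and a third hyperplane H, and since the binary
  order refines inclusion H is contained in neither A nor B; but then the normal vectors of
  A, B, H are linearly independent. Hence 2 f_1 counts the ordered pairs of distinct
  intersecting subsets of [n], which is 4^n - 3^n - (2^n - 1), and this agrees with the
  closed forms of S(n+1,3) and S(n+1,4).\<close>

lemma Stirling_Suc_3: "2 * int (Stirling (Suc n) 3) = 3 ^ n - 2 ^ Suc n + 1"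
proof (induction n)
  case 0
  then show ?case by (simp add: numeral_3_eq_3)
next
  case (Suc n)
  have "Stirling (Suc (Suc n)) 3 = 3 * Stirling (Suc n) 3 + Stirling (Suc n) 2"
    by (simp add: numeral_3_eq_3 numeral_2_eq_2)
  moreover have "int (Stirling (Suc n) 2) = 2 ^ n - 1"
    using Stirling_2[of n] by (simp add: numeral_2_eq_2 of_nat_diff)
  ultimately show ?case
    using Suc by (simp add: algebra_simps)
qed

lemma Stirling_Suc_4: "6 * int (Stirling (Suc n) 4) = 4 ^ n - 3 ^ Suc n + 3 * 2 ^ n - 1"
proof (induction n)
  case 0
  then show ?case by (simp add: numeral_eq_Suc)
next
  case (Suc n)
  have "Stirling (Suc (Suc n)) 4 = 4 * Stirling (Suc n) 4 + Stirling (Suc n) 3"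
    by (simp add: numeral_eq_Suc)
  then show ?case
    using Suc Stirling_Suc_3[of n] by (simp add: algebra_simps)
qed

text \<open>A disjoint pair (A, B) of subsets of S is the same as a map S \<rightarrow> {0, 1, 2}
  sending A to 1 and B to 2.\<close>
lemma card_disjoint_subset_pairs:
  assumes "finite S"
  shows "card {(A, B). A \<subseteq> S \<and> B \<subseteq> S \<and> A \<inter> B = {}} = 3 ^ card S"
proof -
  let ?D = "{(A, B). A \<subseteq> S \<and> B \<subseteq> S \<and> A \<inter> B = {}}"
  define g where "g = (\<lambda>f :: 'a \<Rightarrow> nat. ({x\<in>S. f x = 1}, {x\<in>S. f x = 2}))"
  define h where "h = (\<lambda>(A, B). (\<lambda>x. if x \<in> S then if x \<in> A then 1 else if x \<in> B then 2 else 0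
                                     else undefined) :: 'a \<Rightarrow> nat)"
  have "bij_betw g (S \<rightarrow>\<^sub>E {0, 1, 2}) ?D"
  proof (rule bij_betw_byWitness[where f' = h])
    show "\<forall>f\<in>S \<rightarrow>\<^sub>E {0, 1, 2}. h (g f) = f"
      by (auto simp: g_def h_def PiE_def extensional_def fun_eq_iff)
    show "\<forall>p\<in>?D. g (h p) = p"
      by (auto simp: g_def h_def)
    show "g ` (S \<rightarrow>\<^sub>E {0, 1, 2}) \<subseteq> ?D"
      by (auto simp: g_def)
    show "h ` ?D \<subseteq> S \<rightarrow>\<^sub>E {0, 1, 2}"
      by (auto simp: h_def split: if_splits)
  qed
  then have "card ?D = card (S \<rightarrow>\<^sub>E {0 :: nat, 1, 2})"
    by (simp add: bij_betw_same_card)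
  also have "\<dots> = 3 ^ card S"
    using assms by (simp add: card_PiE numeral_3_eq_3)
  finally show ?thesis .
qed

lemma card_intersecting_subset_pairs:
  assumes "finite S"
  shows "card {(A, B). A \<subseteq> S \<and> B \<subseteq> S \<and> A \<noteq> B \<and> A \<inter> B \<noteq> {}} + 3 ^ card S + 2 ^ card S
           = 4 ^ card S + 1"
proof -
  define P where "P = {(A, B). A \<subseteq> S \<and> B \<subseteq> S \<and> A \<noteq> B \<and> A \<inter> B \<noteq> {}}"
  define D where "D = {(A, B). A \<subseteq> S \<and> B \<subseteq> S \<and> A \<inter> B = {}}"
  define E where "E = (\<lambda>A. (A, A)) ` (Pow S - {{}})"
  have card_E: "card E = 2 ^ card S - 1"
  proof -
    have "card E = card (Pow S - {{}})"
      unfolding E_def by (rule card_image) (auto simp: inj_on_def)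
    also have "\<dots> = 2 ^ card S - 1"
      using assms by (simp add: card_Pow card_Diff_subset)
    finally show ?thesis .
  qed
  have split: "Pow S \<times> Pow S = P \<union> D \<union> E"
    by (auto simp: P_def D_def E_def)
  moreover have "finite (Pow S \<times> Pow S)"
    using assms by simp
  ultimately have "finite P" "finite D" "finite E"
    by (metis finite_Un)+
  moreover have "P \<inter> D = {}" "(P \<union> D) \<inter> E = {}"
    by (auto simp: P_def D_def E_def)
  ultimately have "card (Pow S \<times> Pow S) = card P + card D + card E"
    unfolding split by (simp add: card_Un_disjoint)
  moreover have "card (Pow S \<times> Pow S) = 4 ^ card S"
    using assms by (simp add: card_cartesian_product card_Pow flip: power_mult_distrib)
  moreover have "card D = 3 ^ card S"
    unfolding D_def using assms by (rule card_disjoint_subset_pairs)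
  moreover have "(1 :: nat) \<le> 2 ^ card S"
    by simp
  ultimately show ?thesis
    using card_E unfolding P_def by simp
qed

lemma card_ordered_pairs_eq_twice_card_doubletons:
  assumes "finite X" and sym: "\<And>a b. R a b \<Longrightarrow> R b a" and irrefl: "\<And>a. \<not> R a a"
  shows "card {(a, b). a \<in> X \<and> b \<in> X \<and> R a b} = 2 * card {{a, b} |a b. a \<in> X \<and> b \<in> X \<and> R a b}"
proof -
  let ?U = "{{a, b} |a b. a \<in> X \<and> b \<in> X \<and> R a b}"
  let ?orderings = "\<lambda>F. {(a, b). a \<in> F \<and> b \<in> F \<and> a \<noteq> b}"
  have "finite ?U"
    by (rule finite_subset[of _ "Pow X"]) (use assms(1) in auto)
  have "{(a, b). a \<in> X \<and> b \<in> X \<and> R a b} = (\<Union>F\<in>?U. ?orderings F)"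
    using sym irrefl by blast
  also have "card \<dots> = (\<Sum>F\<in>?U. card (?orderings F))"
  proof (rule card_UN_disjoint[OF \<open>finite ?U\<close>])
    show "\<forall>F\<in>?U. finite (?orderings F)"
    proof
      fix F
      assume "F \<in> ?U"
      then have "finite (F \<times> F)"
        by auto
      then show "finite (?orderings F)"
        by (rule finite_subset[rotated]) auto
    qed
    show "\<forall>F\<in>?U. \<forall>G\<in>?U. F \<noteq> G \<longrightarrow> ?orderings F \<inter> ?orderings G = {}"
      by auto
  qed
  also have "\<dots> = (\<Sum>F\<in>?U. 2)"
  proof (rule sum.cong[OF refl])
    fix F
    assume "F \<in> ?U"
    then obtain a b where "F = {a, b}" "a \<noteq> b"
      using irrefl by blast
    then have "?orderings F = {(a, b), (b, a)}"
      by auto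
    then show "card (?orderings F) = 2"
      using \<open>a \<noteq> b\<close> by simp
  qed
  finally show ?thesis
    by simp
qed

text \<open>No finiteness assumption is needed: over an infinite T the sums in lin_dep are 0.\<close>
lemma lin_dep_subset:
  assumes "lin_dep S" "S \<subseteq> T"
  shows "lin_dep T"
proof -
  obtain c where c: "\<exists>I\<in>S. c I \<noteq> 0" "\<forall>j. (\<Sum>I\<in>S. c I * chi I j) = 0"
    using assms(1) by (auto simp: lin_dep_def)
  define c' where "c' = (\<lambda>I. if I \<in> S then c I else 0)"
  have "(\<Sum>I\<in>T. c' I * chi I j) = 0" for j
  proof (cases "finite T")
    case True
    then have "(\<Sum>I\<in>T. c' I * chi I j) = (\<Sum>I\<in>S. c I * chi I j)"
      using assms(2) by (intro sum.mono_neutral_cong_right) (auto simp: c'_def)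
    then show ?thesis
      using c(2) by simp
  qed simp
  moreover have "\<exists>I\<in>T. c' I \<noteq> 0"
    using c(1) assms(2) by (auto simp: c'_def)
  ultimately show "lin_dep T"
    unfolding lin_dep_def by blast
qed

lemma res_hypsD: "I \<in> res_hyps n \<Longrightarrow> finite I \<and> I \<noteq> {}"
  by (auto simp: res_hyps_def intro: finite_subset)

lemma not_lin_dep_doubleton:
  assumes "A \<noteq> {}" "B \<noteq> {}" "A \<noteq> B"
  shows "\<not> lin_dep {A, B}"
proof
  assume "lin_dep {A, B}"
  then obtain c where c: "c A \<noteq> 0 \<or> c B \<noteq> 0" "\<And>j. c A * chi A j + c B * chi B j = 0"
    using assms(3) by (auto simp: lin_dep_def)
  have "c A = 0 \<and> c B = 0"
  proof (cases "A \<subseteq> B")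
    case True
    then obtain b a where "b \<in> B" "b \<notin> A" "a \<in> A"
      using assms by blast
    then show ?thesis
      using c(2)[of b] c(2)[of a] \<open>A \<subseteq> B\<close> by (auto simp: chi_def)
  next
    case False
    then obtain a b where "a \<in> A" "a \<notin> B" "b \<in> B"
      using assms by blast
    then show ?thesis
      using c(2)[of a] c(2)[of b] by (auto simp: chi_def)
  qed
  then show False
    using c(1) by simp
qed

text \<open>Comparing coordinates in H - A, in H - B and in A \<inter> B forces the coefficient of H
  to vanish, and then the remaining pair is independent.\<close>
lemma not_lin_dep_triple:
  assumes "A \<noteq> B" "A \<inter> B \<noteq> {}" "\<not> H \<subseteq> A" "\<not> H \<subseteq> B"
  shows "\<not> lin_dep {A, B, H}"
proof
  assume "lin_dep {A, B, H}"
  moreover have "H \<noteq> A" "H \<noteq> B"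
    using assms(3,4) by auto
  ultimately obtain c where c: "c A \<noteq> 0 \<or> c B \<noteq> 0 \<or> c H \<noteq> 0"
      "\<And>j. c A * chi A j + c B * chi B j + c H * chi H j = 0"
    using assms(1) by (auto simp: lin_dep_def algebra_simps)
  show False
  proof (cases "c H = 0")
    case True
    then have "lin_dep {A, B}"
      using c assms(1) unfolding lin_dep_def by (intro exI[of _ c]) auto
    then show False
      using not_lin_dep_doubleton assms by blast
  next
    case False
    obtain h where h: "h \<in> H" "h \<notin> A"
      using assms(3) by blast
    then have "h \<in> B" and "c B + c H = 0"
      using c(2)[of h] False by (auto simp: chi_def split: if_splits)
    obtain h' where h': "h' \<in> H" "h' \<notin> B"
      using assms(4) by blast
    then have "h' \<in> A" and "c A + c H = 0"
      using c(2)[of h'] False by (auto simp: chi_def split: if_splits)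
    obtain x where "x \<in> A" "x \<in> B"
      using assms(2) by blast
    then show False
      using c(2)[of x] \<open>c A + c H = 0\<close> \<open>c B + c H = 0\<close> False
      by (cases "x \<in> H") (simp_all add: chi_def)
  qed
qed

lemma bin_code_psubset:
  assumes "H \<subset> A" "finite A"
  shows "bin_code H < bin_code A"
proof -
  obtain b where "b \<in> A - H"
    using assms(1) by blast
  then show ?thesis
    unfolding bin_code_def by (intro sum_strict_mono2) (use assms in auto)
qed

lemma bin_code_subset: "H \<subseteq> A \<Longrightarrow> finite A \<Longrightarrow> bin_code H \<le> bin_code A"
  unfolding bin_code_def by (rule sum_mono2) auto

lemma circuit_disjoint_union:
  assumes "A \<in> res_hyps n" "B \<in> res_hyps n" "A \<inter> B = {}"
  shows "circuit n {A, B, A \<union> B}"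
proof -
  have ne: "A \<noteq> {}" "B \<noteq> {}"
    using assms(1,2) res_hypsD by blast+
  then have distinct: "A \<noteq> B" "A \<union> B \<noteq> A" "A \<union> B \<noteq> B"
    using assms(3) by auto
  have "lin_dep {A, B, A \<union> B}"
    unfolding lin_dep_def
  proof (intro exI[of _ "\<lambda>I. if I = A \<union> B then -1 else 1"] conjI allI)
    show "\<exists>I\<in>{A, B, A \<union> B}. (if I = A \<union> B then - 1 else 1) \<noteq> (0 :: real)"
      by auto
    show "(\<Sum>I\<in>{A, B, A \<union> B}. (if I = A \<union> B then - 1 else 1) * chi I j) = 0" for j
      using distinct assms(3) by (auto simp: chi_def)
  qed
  moreover have "\<not> lin_dep D" if "D \<subset> {A, B, A \<union> B}" for D
  proof -
    have "D \<subseteq> {A, B} \<or> D \<subseteq> {A, A \<union> B} \<or> D \<subseteq> {B, A \<union> B}"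
      using that by blast
    moreover have "\<not> lin_dep {A, B}" "\<not> lin_dep {A, A \<union> B}" "\<not> lin_dep {B, A \<union> B}"
      using not_lin_dep_doubleton ne distinct by auto
    ultimately show ?thesis
      using lin_dep_subset by blast
  qed
  moreover have "{A, B, A \<union> B} \<subseteq> res_hyps n"
    using assms by (auto simp: res_hyps_def)
  ultimately show ?thesis
    unfolding circuit_def by blast
qed

lemma broken_circuit_disjoint:
  assumes "A \<in> res_hyps n" "B \<in> res_hyps n" "A \<inter> B = {}"
  shows "broken_circuit n {A, B}"
  unfolding broken_circuit_def
proof (intro exI conjI)
  have "finite (A \<union> B)"
    using assms(1,2) res_hypsD by blast
  then show "\<forall>H\<in>{A, B, A \<union> B}. bin_code H \<le> bin_code (A \<union> B)"
    by (auto intro: bin_code_subset)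
  show "{A, B} = {A, B, A \<union> B} - {A \<union> B}"
    using assms by (auto simp: res_hyps_def)
qed (use circuit_disjoint_union[OF assms] in auto)

text \<open>The maximal element H of the circuit cannot be A or B, so the circuit contains A, B
  and H; maximality in the binary order then keeps H out of A and B.\<close>
lemma no_broken_circuit_in_intersecting:
  assumes "A \<in> res_hyps n" "B \<in> res_hyps n" "A \<noteq> B" "A \<inter> B \<noteq> {}"
    and "broken_circuit n K" "K \<subseteq> {A, B}"
  shows False
proof -
  obtain C H where C: "circuit n C" "H \<in> C" "\<forall>H'\<in>C. bin_code H' \<le> bin_code H"
      and "K = C - {H}"
    using assms(5) unfolding broken_circuit_def by blast
  then have C_sub: "C \<subseteq> {A, B, H}"
    using assms(6) by blast
  have dep: "lin_dep C"
    using C(1) by (simp add: circuit_def)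
  have "H \<in> res_hyps n"
    using C(1,2) by (auto simp: circuit_def)
  then have hyps: "A \<noteq> {}" "B \<noteq> {}" "H \<noteq> {}" "finite A" "finite B"
    using assms(1,2) res_hypsD by blast+
  have not_in_pair: "\<not> C \<subseteq> {X, Y}" if "X \<in> {A, B, H}" "Y \<in> {A, B, H}" "X \<noteq> Y" for X Y
  proof
    assume "C \<subseteq> {X, Y}"
    with dep have "lin_dep {X, Y}"
      by (rule lin_dep_subset)
    moreover have "X \<noteq> {}" "Y \<noteq> {}"
      using that(1,2) hyps(1-3) by blast+
    ultimately show False
      using not_lin_dep_doubleton that(3) by blast
  qed
  have "\<not> C \<subseteq> {A, B}"
    using not_in_pair[of A B] assms(3) by simp
  then have "H \<noteq> A" "H \<noteq> B"
    using C_sub by auto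
  have "\<not> C \<subseteq> {B, H}" "\<not> C \<subseteq> {A, H}"
    using not_in_pair[of B H] not_in_pair[of A H] \<open>H \<noteq> A\<close> \<open>H \<noteq> B\<close> by simp_all
  then have "A \<in> C" "B \<in> C"
    using C_sub by blast+
  then have "bin_code A \<le> bin_code H" "bin_code B \<le> bin_code H"
    using C(3) by simp_all
  then have "\<not> H \<subset> A" "\<not> H \<subset> B"
    using bin_code_psubset hyps(4,5) by (meson leD)+
  then have "\<not> H \<subseteq> A" "\<not> H \<subseteq> B"
    using \<open>H \<noteq> A\<close> \<open>H \<noteq> B\<close> by auto
  then have "\<not> lin_dep {A, B, H}"
    using not_lin_dep_triple assms(3,4) by blast
  then show False
    using lin_dep_subset[OF dep C_sub] by blast
qed

lemma bc_two_faces: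
  "{F \<in> bc_faces n. card F = 2} =
     {{A, B} |A B. A \<in> res_hyps n \<and> B \<in> res_hyps n \<and> A \<noteq> B \<and> A \<inter> B \<noteq> {}}"
proof (intro set_eqI iffI)
  fix F
  assume F: "F \<in> {F \<in> bc_faces n. card F = 2}"
  then obtain A B where AB: "F = {A, B}" "A \<noteq> B"
    by (auto simp: card_2_iff)
  have "A \<in> res_hyps n" "B \<in> res_hyps n" "\<not> broken_circuit n {A, B}"
    using F AB(1) unfolding bc_faces_def by blast+
  moreover from this have "A \<inter> B \<noteq> {}"
    using broken_circuit_disjoint by blast
  ultimately show "F \<in> {{A, B} |A B. A \<in> res_hyps n \<and> B \<in> res_hyps n \<and> A \<noteq> B \<and> A \<inter> B \<noteq> {}}"
    using AB by blast
next
  fix F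
  assume "F \<in> {{A, B} |A B. A \<in> res_hyps n \<and> B \<in> res_hyps n \<and> A \<noteq> B \<and> A \<inter> B \<noteq> {}}"
  then obtain A B where AB: "F = {A, B}" "A \<in> res_hyps n" "B \<in> res_hyps n" "A \<noteq> B" "A \<inter> B \<noteq> {}"
    by blast
  then have "F \<in> bc_faces n"
    using no_broken_circuit_in_intersecting[OF AB(2-5)] unfolding bc_faces_def by blast
  then show "F \<in> {F \<in> bc_faces n. card F = 2}"
    using AB(1,4) by simp
qed

theorem proposition6p1:
  fixes n :: nat
  assumes "n \<ge> 1"
  shows "f1_BC n = 2 * Stirling (n + 1) 3 + 3 * Stirling (n + 1) 4"
proof -
  have "finite (res_hyps n)"
    by (rule finite_subset[of _ "Pow {1..n}"]) (auto simp: res_hyps_def)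
  then have "2 * f1_BC n = card {(A, B). A \<in> res_hyps n \<and> B \<in> res_hyps n \<and> A \<noteq> B \<and> A \<inter> B \<noteq> {}}"
    unfolding f1_BC_def bc_two_faces by (subst card_ordered_pairs_eq_twice_card_doubletons) auto
  also have "\<dots> = card {(A, B). A \<subseteq> {1..n} \<and> B \<subseteq> {1..n} \<and> A \<noteq> B \<and> A \<inter> B \<noteq> {}}"
    by (rule arg_cong[where f = card]) (auto simp: res_hyps_def)
  finally have "2 * f1_BC n + 3 ^ n + 2 ^ n = 4 ^ n + 1"
    using card_intersecting_subset_pairs[of "{1..n}"] by simp
  then have "2 * int (f1_BC n) + 3 ^ n + 2 ^ n = 4 ^ n + 1"
    by (metis (mono_tags) of_nat_add of_nat_mult of_nat_numeral of_nat_power of_nat_1)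
  then have "2 * int (f1_BC n) = 2 * int (2 * Stirling (n + 1) 3 + 3 * Stirling (n + 1) 4)"
    using Stirling_Suc_3[of n] Stirling_Suc_4[of n] by (simp add: algebra_simps)
  then show ?thesis
    by simp
qed

end
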